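(* Let $\mathcal{X}=\mathcal{X}_1\times\cdots\times\mathcal{X}_n$ and $\mathcal{Y}=\mathcal{Y}_1\times\cdots\times\mathcal{Y}_m$ be finite sets. If $$1+\sum_{j\in[m]}(|\mathcal{Y}_j|-1)\;\geq\;|\mathcal{X}|\Big/\max_{i\in[n]}|\mathcal{X}_i|,$$ then $\operatorname{RBM}_{\mathcal{X},\mathcal{Y}}$ is a universal approximator, i.e., every probability distribution on $\mathcal{X}$ can be approximated arbitrarily well by distributions from $\operatorname{RBM}_{\mathcal{X},\mathcal{Y}}$.
   Context: For a finite product set $\mathcal{Z}=\mathcal{Z}_1\times\cdots\times\mathcal{Z}_k$, fix in each $\mathcal{Z}_i$ a reference state $z_i^0$ and let $F^{\mathcal{Z}}(z)=\big(1,(\mathbb{1}[z_i=a])_{i\in[k],\,a\in\mathcal{Z}_i\setminus\{z_i^0\}}\big)^\top$ be the sufficient statistics of the independence model on $\mathcal{Z}$. The restricted Boltzmann machine model $\operatorname{RBM}_{\mathcal{X},\mathcal{Y}}$ is the set of probability distributions on $\mathcal{X}$ of the form $p(x)=\frac{1}{Z(\Theta)}\sum_{y\in\mathcal{Y}}\exp\big(F^{\mathcal{X}}(x)^\top\Theta F^{\mathcal{Y}}(y)\big)$, $x\in\mathcal{X}$, for all real matrices $\Theta$ of the appropriate size, with $Z(\Theta)$ the normalizing constant. "Approximated arbitrarily well" means lying in the topological closure of the model within the probability simplex on $\mathcal{X}$. *)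

theory Defs
  imports "HOL-Analysis.Analysis"
begin

text \<open>Index set of the sufficient statistics F^Z: None is the constant coordinate 1,
  Some (i,a) is the coordinate for the indicator [z_i = a], a in Z_i minus {z0 i}.\<close>

definition suff_idx :: "nat \<Rightarrow> (nat \<Rightarrow> 'a set) \<Rightarrow> (nat \<Rightarrow> 'a) \<Rightarrow> (nat \<times> 'a) option set" where
  "suff_idx k Z z0 = insert None (Some ` (SIGMA i:{..<k}. Z i - {z0 i}))"

definition suff_stat :: "(nat \<Rightarrow> 'a) \<Rightarrow> (nat \<times> 'a) option \<Rightarrow> real" where
  "suff_stat z s = (case s of None \<Rightarrow> 1 | Some (i, a) \<Rightarrow> (if z i = a then 1 else 0))"

definition rbm_energy ::
  "nat \<Rightarrow> (nat \<Rightarrow> 'a set) \<Rightarrow> (nat \<Rightarrow> 'a) \<Rightarrow> nat \<Rightarrow> (nat \<Rightarrow> 'b set) \<Rightarrow> (nat \<Rightarrow> 'b) \<Rightarrow>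
   ((nat \<times> 'a) option \<Rightarrow> (nat \<times> 'b) option \<Rightarrow> real) \<Rightarrow> (nat \<Rightarrow> 'a) \<Rightarrow> (nat \<Rightarrow> 'b) \<Rightarrow> real" where
  "rbm_energy n Xs x0 m Ys y0 \<Theta> x y =
     (\<Sum>s\<in>suff_idx n Xs x0. \<Sum>t\<in>suff_idx m Ys y0. suff_stat x s * \<Theta> s t * suff_stat y t)"

definition rbm_weight ::
  "nat \<Rightarrow> (nat \<Rightarrow> 'a set) \<Rightarrow> (nat \<Rightarrow> 'a) \<Rightarrow> nat \<Rightarrow> (nat \<Rightarrow> 'b set) \<Rightarrow> (nat \<Rightarrow> 'b) \<Rightarrow>
   ((nat \<times> 'a) option \<Rightarrow> (nat \<times> 'b) option \<Rightarrow> real) \<Rightarrow> (nat \<Rightarrow> 'a) \<Rightarrow> real" where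
  "rbm_weight n Xs x0 m Ys y0 \<Theta> x =
     (\<Sum>y\<in>PiE {..<m} Ys. exp (rbm_energy n Xs x0 m Ys y0 \<Theta> x y))"

definition rbm_dist ::
  "nat \<Rightarrow> (nat \<Rightarrow> 'a set) \<Rightarrow> (nat \<Rightarrow> 'a) \<Rightarrow> nat \<Rightarrow> (nat \<Rightarrow> 'b set) \<Rightarrow> (nat \<Rightarrow> 'b) \<Rightarrow>
   ((nat \<times> 'a) option \<Rightarrow> (nat \<times> 'b) option \<Rightarrow> real) \<Rightarrow> (nat \<Rightarrow> 'a) \<Rightarrow> real" where
  "rbm_dist n Xs x0 m Ys y0 \<Theta> =
     (\<lambda>x. if x \<in> PiE {..<n} Xs
          then rbm_weight n Xs x0 m Ys y0 \<Theta> x / (\<Sum>x'\<in>PiE {..<n} Xs. rbm_weight n Xs x0 m Ys y0 \<Theta> x')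
          else 0)"

definition RBM ::
  "nat \<Rightarrow> (nat \<Rightarrow> 'a set) \<Rightarrow> (nat \<Rightarrow> 'a) \<Rightarrow> nat \<Rightarrow> (nat \<Rightarrow> 'b set) \<Rightarrow> (nat \<Rightarrow> 'b) \<Rightarrow>
   ((nat \<Rightarrow> 'a) \<Rightarrow> real) set" where
  "RBM n Xs x0 m Ys y0 = range (rbm_dist n Xs x0 m Ys y0)"

definition prob_simplex :: "'c set \<Rightarrow> ('c \<Rightarrow> real) set" where
  "prob_simplex X = {p. (\<forall>x. x \<notin> X \<longrightarrow> p x = 0) \<and> (\<forall>x\<in>X. 0 \<le> p x) \<and> sum p X = 1}"

end

theory Submission
  imports Defs
begin

(* Choose a visible coordinate k with |X_k| maximal. The lines {x. x i = p i for all i ~= k}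
   partition X into |X| / |X_k| classes, so by hypothesis all lines except the one through the
   reference state can be assigned injectively to the non-reference states (j, b) of the hidden
   units. For a strictly positive target q, the visible biases realise a product distribution r
   that equals q on the distinguished line and lies strictly below q elsewhere. The hidden state
   assigned to a line p is given parameters which, as a scale N grows, make its Boltzmann factor
   tend to the indicator of p times q/r - 1, while unassigned hidden states are switched off.
   The unnormalised marginal then tends to r (1 + (q/r - 1)) = q, so every strictly positive
   distribution lies in the closure of the model, and these are dense in the simplex. *)

lemma tendsto_fun_iff_pointwise:
  fixes f :: "'i \<Rightarrow> 'c \<Rightarrow> 'd::topological_space"
  shows "(f \<longlongrightarrow> l) F \<longleftrightarrow> (\<forall>x. ((\<lambda>N. f N x) \<longlongrightarrow> l x) F)"
proof -
  have "(f \<longlongrightarrow> l) F \<longleftrightarrow> limitin (product_topology (\<lambda>_. euclidean) UNIV) f l F"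
    by (simp add: euclidean_product_topology)
  also have "\<dots> \<longleftrightarrow> (\<forall>x. ((\<lambda>N. f N x) \<longlongrightarrow> l x) F)"
    by (simp add: limitin_componentwise)
  finally show ?thesis .
qed

lemma LIMSEQ_in_closure:
  assumes "\<And>N. f N \<in> S" and "f \<longlonglongrightarrow> l"
  shows "l \<in> closure S"
proof (rule Lim_in_closed_set[OF closed_closure _ trivial_limit_sequentially assms(2)])
  show "\<forall>\<^sub>F N in sequentially. f N \<in> closure S"
    using assms(1) closure_subset by (intro always_eventually allI) blast
qed

lemma LIMSEQ_exp_neg_real: "(\<lambda>N. exp (- real N)) \<longlonglongrightarrow> 0"
  by (rule filterlim_compose[OF exp_at_bot])
     (rule filterlim_compose[OF filterlim_uminus_at_bot_at_top filterlim_real_sequentially])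

lemma exists_exp_bound_ratio:
  fixes q :: "'x \<Rightarrow> real"
  assumes "finite X" and pos: "\<And>x. x \<in> X \<Longrightarrow> 0 < q x"
  obtains c where "0 \<le> c" and "\<And>x y. x \<in> X \<Longrightarrow> y \<in> X \<Longrightarrow> q y < q x * exp c"
proof (cases "X = {}")
  case True
  then show ?thesis using that[of 0] by simp
next
  case False
  define lo where "lo = Min (q ` X)"
  define hi where "hi = Max (q ` X)"
  have "0 < lo"
    using \<open>finite X\<close> False pos unfolding lo_def by (subst Min_gr_iff) auto
  have lo_le: "lo \<le> q x" if "x \<in> X" for x
    using \<open>finite X\<close> that unfolding lo_def by (intro Min_le) auto
  have le_hi: "q x \<le> hi" if "x \<in> X" for x
    using \<open>finite X\<close> that by (simp add: hi_def)
  show ?thesis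
  proof
    show "0 \<le> hi / lo"
      using \<open>0 < lo\<close> False le_hi pos by (metis all_not_in_conv divide_nonneg_pos less_le order_trans)
    fix x y assume "x \<in> X" "y \<in> X"
    have "hi / lo < exp (hi / lo)" using exp_ge_add_one_self[of "hi / lo"] by linarith
    then have "hi < lo * exp (hi / lo)"
      using \<open>0 < lo\<close> by (simp add: pos_divide_less_eq mult.commute)
    then have "q y < lo * exp (hi / lo)" using le_hi[OF \<open>y \<in> X\<close>] by linarith
    also have "\<dots> \<le> q x * exp (hi / lo)" using lo_le[OF \<open>x \<in> X\<close>] by simp
    finally show "q y < q x * exp (hi / lo)" .
  qed
qed

lemma prob_simplex_subset_closure_positive:
  assumes "finite X" and "X \<noteq> {}"
  shows "prob_simplex X \<subseteq> closure {q \<in> prob_simplex X. \<forall>x\<in>X. 0 < q x}"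
proof
  fix q assume q: "q \<in> prob_simplex X"
  define e where "e N = 1 / real (Suc N)" for N
  define u where "u x = (if x \<in> X then 1 / real (card X) else 0)" for x
  define mix where "mix N x = (1 - e N) * q x + e N * u x" for N x
  have card: "0 < card X" using assms by (simp add: card_gt_0_iff)
  have e: "0 < e N" "e N \<le> 1" for N by (auto simp: e_def)
  have "sum u X = 1" using card by (simp add: u_def)
  then have "mix N \<in> prob_simplex X" for N
    using q e[of N] card by (auto simp: prob_simplex_def mix_def u_def sum.distrib
      simp flip: sum_distrib_left intro!: add_nonneg_nonneg)
  moreover have "0 < mix N x" if "x \<in> X" for N x
    using q that card e[of N]
    by (auto simp: prob_simplex_def mix_def u_def intro!: add_nonneg_pos)
  moreover have "mix \<longlonglongrightarrow> q"
  proof -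
    have "e \<longlonglongrightarrow> 0"
      unfolding e_def using LIMSEQ_inverse_real_of_nat by (simp add: inverse_eq_divide)
    then show ?thesis
      unfolding tendsto_fun_iff_pointwise mix_def by (auto intro!: tendsto_eq_intros)
  qed
  ultimately show "q \<in> closure {q \<in> prob_simplex X. \<forall>x\<in>X. 0 < q x}"
    by (intro LIMSEQ_in_closure[of mix]) auto
qed

lemma card_PiE_eq_mult_card_PiE_fun_upd:
  fixes k n :: nat
  assumes "k < n"
  shows "card (PiE {..<n} Xs) = card (Xs k) * card (PiE {..<n} (Xs(k := {a})))"
proof -
  have "card (PiE {..<n} (Xs(k := {a}))) = (\<Prod>i\<in>{..<n} - {k}. card (Xs i))"
    using assms by (simp add: card_PiE prod.remove[of "{..<n}" k])
  then show ?thesis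
    using assms by (simp add: card_PiE prod.remove[of "{..<n}" k])
qed

lemma card_SIGMA_diff_singleton:
  fixes m :: nat
  assumes "\<And>j. j < m \<Longrightarrow> finite (Ys j) \<and> y0 j \<in> Ys j"
  shows "real (card (SIGMA j:{..<m}. Ys j - {y0 j})) = (\<Sum>j<m. real (card (Ys j)) - 1)"
proof -
  have "card (SIGMA j:{..<m}. Ys j - {y0 j}) = (\<Sum>j<m. card (Ys j) - 1)"
    using assms by (subst card_SigmaI) (auto intro!: sum.cong simp: card_Diff_singleton)
  moreover have "card (Ys j) \<ge> 1" if "j < m" for j
    using assms[OF that] by (metis One_nat_def Suc_leI card_gt_0_iff empty_iff)
  ultimately show ?thesis by (simp add: of_nat_diff)
qed

lemma card_lines_le_card_hidden_states:
  fixes n m k :: nat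
  assumes k: "k < n" and "0 < card (Xs k)"
    and hY: "\<And>j. j < m \<Longrightarrow> finite (Ys j) \<and> y0 j \<in> Ys j"
    and ratio: "real (card (PiE {..<n} Xs)) / real (card (Xs k)) \<le> 1 + (\<Sum>j<m. real (card (Ys j)) - 1)"
  shows "card (PiE {..<n} (Xs(k := {a}))) \<le> 1 + card (SIGMA j:{..<m}. Ys j - {y0 j})"
proof -
  have "real (card (PiE {..<n} (Xs(k := {a})))) = real (card (PiE {..<n} Xs)) / real (card (Xs k))"
    using assms(2) by (simp add: card_PiE_eq_mult_card_PiE_fun_upd[OF k, of Xs a])
  also have "\<dots> \<le> 1 + real (card (SIGMA j:{..<m}. Ys j - {y0 j}))"
    using ratio card_SIGMA_diff_singleton[of m Ys y0] hY by simp
  finally show ?thesis by linarith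
qed

lemma prod_sum_single_excitation:
  fixes m :: nat and d :: "'c::comm_ring_1"
  assumes "\<And>j. j < m \<Longrightarrow> finite (Ys j) \<and> y0 j \<in> Ys j"
  shows "(\<Prod>j<m. \<Sum>b\<in>Ys j. if b = y0 j then 1 else if (j, b) = h then d else 0)
       = 1 + (if h \<in> (SIGMA j:{..<m}. Ys j - {y0 j}) then d else 0)"
proof -
  obtain j0 b0 where h: "h = (j0, b0)" by fastforce
  have "(\<Sum>b\<in>Ys j. if b = y0 j then 1 else if (j, b) = h then d else 0)
      = (if j = j0 \<and> h \<in> (SIGMA j:{..<m}. Ys j - {y0 j}) then 1 + d else 1)" if "j < m" for j
  proof -
    have "(\<Sum>b\<in>Ys j. if b = y0 j then 1 else if (j, b) = h then d else 0)
        = 1 + (\<Sum>b\<in>Ys j - {y0 j}. if (j, b) = h then d else 0)"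
      using assms[OF that] by (simp add: sum.remove[of "Ys j" "y0 j"])
    also have "\<dots> = 1 + (if j = j0 \<and> b0 \<in> Ys j - {y0 j} then d else 0)"
      using assms[OF that] by (cases "j = j0") (simp_all add: h)
    finally show ?thesis using that by (auto simp: h)
  qed
  then have "(\<Prod>j<m. \<Sum>b\<in>Ys j. if b = y0 j then 1 else if (j, b) = h then d else 0)
      = (\<Prod>j<m. if j = j0 then (if h \<in> (SIGMA j:{..<m}. Ys j - {y0 j}) then 1 + d else 1) else 1)"
    by (intro prod.cong) auto
  then show ?thesis by (auto simp: h)
qed

lemma sum_suff_stat:
  assumes z: "z \<in> PiE {..<k} Z" and fin: "\<And>i. i < k \<Longrightarrow> finite (Z i)"
  shows "(\<Sum>s\<in>suff_idx k Z zr. suff_stat z s * w s)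
       = w None + (\<Sum>i<k. if z i = zr i then 0 else w (Some (i, z i)))"
proof -
  let ?S = "SIGMA i:{..<k}. Z i - {zr i}"
  have "(\<Sum>s\<in>suff_idx k Z zr. suff_stat z s * w s)
      = w None + (\<Sum>(i, a)\<in>?S. suff_stat z (Some (i, a)) * w (Some (i, a)))"
    unfolding suff_idx_def using fin
    by (subst sum.insert) (auto simp: sum.reindex suff_stat_def case_prod_unfold)
  also have "(\<Sum>(i, a)\<in>?S. suff_stat z (Some (i, a)) * w (Some (i, a)))
      = (\<Sum>i<k. \<Sum>a\<in>Z i - {zr i}. suff_stat z (Some (i, a)) * w (Some (i, a)))"
    using fin by (subst sum.Sigma) auto
  also have "\<dots> = (\<Sum>i<k. if z i = zr i then 0 else w (Some (i, z i)))"
    using fin z by (intro sum.cong)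
      (auto simp: suff_stat_def sum.delta PiE_iff if_distrib[of "\<lambda>u. u * _"] cong: if_cong)
  finally show ?thesis .
qed

definition theta_of_potentials ::
  "nat \<Rightarrow> (nat \<Rightarrow> 'a) \<Rightarrow> ((nat \<times> 'b) option \<Rightarrow> nat \<Rightarrow> 'a \<Rightarrow> real)
    \<Rightarrow> (nat \<times> 'a) option \<Rightarrow> (nat \<times> 'b) option \<Rightarrow> real" where
  "theta_of_potentials n x0 V s t =
     (case s of None \<Rightarrow> (\<Sum>i<n. V t i (x0 i)) | Some (i, a) \<Rightarrow> V t i a - V t i (x0 i))"

lemma rbm_energy_theta_of_potentials:
  assumes x: "x \<in> PiE {..<n} Xs" and finX: "\<And>i. i < n \<Longrightarrow> finite (Xs i)"
    and y: "y \<in> PiE {..<m} Ys" and finY: "\<And>j. j < m \<Longrightarrow> finite (Ys j)"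
  shows "rbm_energy n Xs x0 m Ys y0 (theta_of_potentials n x0 V) x y
     = (\<Sum>i<n. V None i (x i))
       + (\<Sum>j<m. if y j = y0 j then 0 else \<Sum>i<n. V (Some (j, y j)) i (x i))"
proof -
  have visible: "(\<Sum>s\<in>suff_idx n Xs x0. suff_stat x s * theta_of_potentials n x0 V s t)
      = (\<Sum>i<n. V t i (x i))" for t
    using sum_suff_stat[OF x finX, where zr=x0 and w="\<lambda>s. theta_of_potentials n x0 V s t"]
    by (simp add: theta_of_potentials_def if_distrib sum_subtractf flip: sum.distrib cong: if_cong)
       (auto intro: sum.cong)
  have "rbm_energy n Xs x0 m Ys y0 (theta_of_potentials n x0 V) x y
      = (\<Sum>t\<in>suff_idx m Ys y0. suff_stat y t *
           (\<Sum>s\<in>suff_idx n Xs x0. suff_stat x s * theta_of_potentials n x0 V s t))"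
    unfolding rbm_energy_def
    by (subst sum.swap) (simp add: sum_distrib_left sum_distrib_right mult_ac)
  also have "\<dots> = (\<Sum>i<n. V None i (x i))
       + (\<Sum>j<m. if y j = y0 j then 0 else \<Sum>i<n. V (Some (j, y j)) i (x i))"
    by (simp add: visible sum_suff_stat[OF y finY])
  finally show ?thesis .
qed

lemma rbm_weight_theta_of_potentials:
  assumes x: "x \<in> PiE {..<n} Xs" and finX: "\<And>i. i < n \<Longrightarrow> finite (Xs i)"
    and finY: "\<And>j. j < m \<Longrightarrow> finite (Ys j)"
  shows "rbm_weight n Xs x0 m Ys y0 (theta_of_potentials n x0 V) x
     = exp (\<Sum>i<n. V None i (x i)) *
       (\<Prod>j<m. \<Sum>b\<in>Ys j. exp (if b = y0 j then 0 else \<Sum>i<n. V (Some (j, b)) i (x i)))"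
proof -
  have "rbm_weight n Xs x0 m Ys y0 (theta_of_potentials n x0 V) x
     = (\<Sum>y\<in>PiE {..<m} Ys. exp (\<Sum>i<n. V None i (x i)) *
          (\<Prod>j<m. exp (if y j = y0 j then 0 else \<Sum>i<n. V (Some (j, y j)) i (x i))))"
    unfolding rbm_weight_def
    by (intro sum.cong refl)
       (simp add: rbm_energy_theta_of_potentials[OF x finX _ finY] exp_add exp_sum if_distrib)
  also have "\<dots> = exp (\<Sum>i<n. V None i (x i)) *
       (\<Prod>j<m. \<Sum>b\<in>Ys j. exp (if b = y0 j then 0 else \<Sum>i<n. V (Some (j, b)) i (x i)))"
    by (subst prod_sum_PiE) (auto simp: finY sum_distrib_left)
  finally show ?thesis .
qed

lemma tendsto_rbm_weight_single_excitation:
  fixes V :: "nat \<Rightarrow> (nat \<times> 'b) option \<Rightarrow> nat \<Rightarrow> 'a \<Rightarrow> real" and m :: nat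
  assumes x: "x \<in> PiE {..<n} Xs" and finX: "\<And>i. i < n \<Longrightarrow> finite (Xs i)"
    and hY: "\<And>j. j < m \<Longrightarrow> finite (Ys j) \<and> y0 j \<in> Ys j"
    and visible: "\<And>N. (\<Sum>i<n. V N None i (x i)) = v"
    and hidden: "\<And>j b. (\<lambda>N. exp (\<Sum>i<n. V N (Some (j, b)) i (x i)))
                         \<longlonglongrightarrow> (if (j, b) = h then d else 0)"
  shows "(\<lambda>N. rbm_weight n Xs x0 m Ys y0 (theta_of_potentials n x0 (V N)) x)
           \<longlonglongrightarrow> exp v * (1 + (if h \<in> (SIGMA j:{..<m}. Ys j - {y0 j}) then d else 0))"
proof -
  have finY: "\<And>j. j < m \<Longrightarrow> finite (Ys j)" using hY by blast
  have factor: "(\<lambda>N. exp (if b = y0 j then 0 else \<Sum>i<n. V N (Some (j, b)) i (x i)))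
      \<longlonglongrightarrow> (if b = y0 j then 1 else if (j, b) = h then d else 0)" for j b
    using hidden[of j b] by (cases "b = y0 j") simp_all
  have "rbm_weight n Xs x0 m Ys y0 (theta_of_potentials n x0 (V N)) x
      = exp v * (\<Prod>j<m. \<Sum>b\<in>Ys j. exp (if b = y0 j then 0 else \<Sum>i<n. V N (Some (j, b)) i (x i)))"
    for N by (simp add: rbm_weight_theta_of_potentials[OF x finX finY] visible)
  then have "(\<lambda>N. rbm_weight n Xs x0 m Ys y0 (theta_of_potentials n x0 (V N)) x)
      \<longlonglongrightarrow> exp v * (\<Prod>j<m. \<Sum>b\<in>Ys j. if b = y0 j then 1 else if (j, b) = h then d else 0)"
    by (simp only:) (intro tendsto_mult tendsto_const tendsto_prod tendsto_sum factor)
  then show ?thesis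
    by (simp only: prod_sum_single_excitation[OF hY])
qed

lemma in_closure_RBM_if_weights_tendsto:
  assumes q: "q \<in> prob_simplex (PiE {..<n} Xs)"
    and lim: "\<And>x. x \<in> PiE {..<n} Xs \<Longrightarrow> (\<lambda>N. rbm_weight n Xs x0 m Ys y0 (\<Theta> N) x) \<longlonglongrightarrow> q x"
  shows "q \<in> closure (RBM n Xs x0 m Ys y0)"
proof (rule LIMSEQ_in_closure)
  show "rbm_dist n Xs x0 m Ys y0 (\<Theta> N) \<in> RBM n Xs x0 m Ys y0" for N
    by (simp add: RBM_def)
  have sum: "sum q (PiE {..<n} Xs) = 1" and out: "\<And>x. x \<notin> PiE {..<n} Xs \<Longrightarrow> q x = 0"
    using q by (auto simp: prob_simplex_def)
  have "(\<lambda>N. rbm_dist n Xs x0 m Ys y0 (\<Theta> N) x) \<longlonglongrightarrow> q x" for x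
  proof (cases "x \<in> PiE {..<n} Xs")
    case True
    have "(\<lambda>N. \<Sum>x'\<in>PiE {..<n} Xs. rbm_weight n Xs x0 m Ys y0 (\<Theta> N) x') \<longlonglongrightarrow> 1"
      unfolding sum[symmetric] by (intro tendsto_sum lim)
    then have "(\<lambda>N. rbm_weight n Xs x0 m Ys y0 (\<Theta> N) x /
        (\<Sum>x'\<in>PiE {..<n} Xs. rbm_weight n Xs x0 m Ys y0 (\<Theta> N) x')) \<longlonglongrightarrow> q x / 1"
      using True by (intro tendsto_divide lim) auto
    then show ?thesis using True by (simp add: rbm_dist_def)
  qed (simp add: rbm_dist_def out)
  then show "(\<lambda>N. rbm_dist n Xs x0 m Ys y0 (\<Theta> N)) \<longlonglongrightarrow> q"
    by (simp add: tendsto_fun_iff_pointwise)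
qed

(* The line through p in direction k is the set of x with x(k := p k) = p. *)
definition line_potential :: "nat \<Rightarrow> real \<Rightarrow> (nat \<Rightarrow> 'a) \<Rightarrow> ('a \<Rightarrow> real) \<Rightarrow> nat \<Rightarrow> 'a \<Rightarrow> real" where
  "line_potential k c p A i a = (if i = k then A a else if a = p i then 0 else - c)"

lemma sum_line_potential_on_line:
  assumes "k < n" and "x(k := p k) = p"
  shows "(\<Sum>i<n. line_potential k c p A i (x i)) = A (x k)"
proof -
  have "x i = p i" if "i \<noteq> k" for i
    using fun_cong[OF assms(2), of i] that by simp
  then have "(\<Sum>i<n. line_potential k c p A i (x i)) = (\<Sum>i<n. if i = k then A (x k) else 0)"
    by (intro sum.cong) (auto simp: line_potential_def)
  also have "\<dots> = A (x k)" using assms(1) by simp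
  finally show ?thesis .
qed

lemma sum_line_potential_off_line:
  assumes "k < n" and "x \<in> extensional {..<n}" and "p \<in> extensional {..<n}"
    and "x(k := p k) \<noteq> p" and "0 \<le> c"
  shows "(\<Sum>i<n. line_potential k c p A i (x i)) \<le> A (x k) - c"
proof -
  obtain i0 where i0: "i0 \<noteq> k" "x i0 \<noteq> p i0"
    using assms(4) by (auto simp: fun_eq_iff split: if_splits)
  with assms(2,3) have "i0 < n" by (metis extensional_arb lessThan_iff)
  have "(\<Sum>i<n. line_potential k c p A i (x i))
      \<le> (\<Sum>i<n. (if i = k then A (x k) else 0) + (if i = i0 then - c else 0))"
    using i0 assms(5) by (intro sum_mono) (auto simp: line_potential_def)
  also have "\<dots> = A (x k) - c"
    using assms(1) \<open>i0 < n\<close> by (simp add: sum.distrib)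
  finally show ?thesis .
qed

lemma tendsto_exp_sum_line_potential:
  assumes "k < n" and "x \<in> extensional {..<n}" and "p \<in> extensional {..<n}"
  shows "(\<lambda>N. exp (\<Sum>i<n. line_potential k (real N) p A i (x i)))
           \<longlonglongrightarrow> (if x(k := p k) = p then exp (A (x k)) else 0)"
proof (cases "x(k := p k) = p")
  case True
  then show ?thesis using assms(1) by (simp add: sum_line_potential_on_line)
next
  case False
  have "(\<lambda>N. exp (\<Sum>i<n. line_potential k (real N) p A i (x i))) \<longlonglongrightarrow> 0"
  proof (rule tendsto_sandwich[OF _ _ tendsto_const
        tendsto_mult_right_zero[OF LIMSEQ_exp_neg_real, of "exp (A (x k))"]])
    show "\<forall>\<^sub>F N in sequentially. 0 \<le> exp (\<Sum>i<n. line_potential k (real N) p A i (x i))"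
      by simp
    have "exp (\<Sum>i<n. line_potential k (real N) p A i (x i)) \<le> exp (A (x k)) * exp (- real N)" for N
      using sum_line_potential_off_line[OF assms False] by (simp flip: exp_add)
    then show "\<forall>\<^sub>F N in sequentially.
        exp (\<Sum>i<n. line_potential k (real N) p A i (x i)) \<le> exp (A (x k)) * exp (- real N)"
      by simp
  qed
  then show ?thesis using False by simp
qed

lemma line_potential_minorant:
  fixes n k :: nat and q :: "(nat \<Rightarrow> 'a) \<Rightarrow> real"
  assumes fin: "\<And>i. i < n \<Longrightarrow> finite (Xs i)" and k: "k < n" and p: "p \<in> PiE {..<n} Xs"
    and pos: "\<And>x. x \<in> PiE {..<n} Xs \<Longrightarrow> 0 < q x"
  obtains c where
    "\<And>x. x \<in> PiE {..<n} Xs \<Longrightarrow> x(k := p k) = p \<Longrightarrow>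
       exp (\<Sum>i<n. line_potential k c p (\<lambda>a. ln (q (p(k := a)))) i (x i)) = q x"
    "\<And>x. x \<in> PiE {..<n} Xs \<Longrightarrow> x(k := p k) \<noteq> p \<Longrightarrow>
       exp (\<Sum>i<n. line_potential k c p (\<lambda>a. ln (q (p(k := a)))) i (x i)) < q x"
proof -
  have "finite (PiE {..<n} Xs)" using fin by (auto intro!: finite_PiE)
  then obtain c where "0 \<le> c"
    and ratio: "\<And>x y. x \<in> PiE {..<n} Xs \<Longrightarrow> y \<in> PiE {..<n} Xs \<Longrightarrow> q y < q x * exp c"
    using exists_exp_bound_ratio[of "PiE {..<n} Xs" q] pos by blast
  have upd: "p(k := x k) \<in> PiE {..<n} Xs" if "x \<in> PiE {..<n} Xs" for x
    using that p k by (auto simp: PiE_iff extensional_def)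
  show thesis
  proof
    fix x assume x: "x \<in> PiE {..<n} Xs" and on: "x(k := p k) = p"
    then have "p(k := x k) = x" by (metis fun_upd_triv fun_upd_upd)
    then show "exp (\<Sum>i<n. line_potential k c p (\<lambda>a. ln (q (p(k := a)))) i (x i)) = q x"
      using x on k pos by (simp add: sum_line_potential_on_line)
  next
    fix x assume x: "x \<in> PiE {..<n} Xs" and off: "x(k := p k) \<noteq> p"
    have "exp (\<Sum>i<n. line_potential k c p (\<lambda>a. ln (q (p(k := a)))) i (x i))
        \<le> exp (ln (q (p(k := x k))) - c)"
      using sum_line_potential_off_line[OF k _ _ off \<open>0 \<le> c\<close>] x p by (simp add: PiE_iff)
    also have "\<dots> = q (p(k := x k)) / exp c"
      using pos[OF upd[OF x]] by (simp add: exp_diff)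
    also have "\<dots> < q x"
      using ratio[OF x upd[OF x]] by (simp add: divide_less_eq)
    finally show "exp (\<Sum>i<n. line_potential k c p (\<lambda>a. ln (q (p(k := a)))) i (x i)) < q x" .
  qed
qed

lemma exists_line_assignment:
  fixes n m k :: nat
  assumes hX: "\<And>i. i < n \<Longrightarrow> finite (Xs i) \<and> x0 i \<in> Xs i"
    and hY: "\<And>j. j < m \<Longrightarrow> finite (Ys j) \<and> y0 j \<in> Ys j" and k: "k < n"
    and lines: "card (PiE {..<n} (Xs(k := {x0 k}))) \<le> 1 + card (SIGMA j:{..<m}. Ys j - {y0 j})"
  obtains \<iota> :: "(nat \<Rightarrow> 'a) \<Rightarrow> nat \<times> 'b" where
    "inj_on \<iota> (PiE {..<n} (Xs(k := {x0 k})) - {restrict x0 {..<n}})"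
    "\<iota> ` (PiE {..<n} (Xs(k := {x0 k})) - {restrict x0 {..<n}}) \<subseteq> (SIGMA j:{..<m}. Ys j - {y0 j})"
proof -
  let ?P = "PiE {..<n} (Xs(k := {x0 k}))" and ?H = "SIGMA j:{..<m}. Ys j - {y0 j}"
  have "restrict x0 {..<n} \<in> ?P" using hX k by auto
  moreover have "finite ?P" "finite ?H" using hX hY by (auto intro!: finite_PiE)
  ultimately have "card (?P - {restrict x0 {..<n}}) \<le> card ?H"
    using lines by (simp add: card_Diff_singleton)
  then show ?thesis
    using card_le_inj[of "?P - {restrict x0 {..<n}}" ?H] \<open>finite ?P\<close> \<open>finite ?H\<close> that by blast
qed

(* As N grows, the hidden state \<iota> p concentrates on the line p with profile ln D; hidden states
   outside the range of \<iota> get the potential - N, which switches them off in the limit. *)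
definition detector_potentials ::
  "nat \<Rightarrow> (nat \<Rightarrow> 'a) set \<Rightarrow> ((nat \<Rightarrow> 'a) \<Rightarrow> nat \<times> 'b) \<Rightarrow> ((nat \<Rightarrow> 'a) \<Rightarrow> real)
    \<Rightarrow> (nat \<Rightarrow> 'a \<Rightarrow> real) \<Rightarrow> nat \<Rightarrow> (nat \<times> 'b) option \<Rightarrow> nat \<Rightarrow> 'a \<Rightarrow> real" where
  "detector_potentials k L \<iota> D U N t = (case t of
      None \<Rightarrow> U
    | Some h \<Rightarrow> if h \<in> \<iota> ` L
        then line_potential k (real N) (inv_into L \<iota> h) (\<lambda>a. ln (D ((inv_into L \<iota> h)(k := a))))
        else (\<lambda>i a. if i = k then - real N else 0))"

lemma tendsto_exp_detector_potential:
  fixes n k :: nat and \<iota> :: "(nat \<Rightarrow> 'a) \<Rightarrow> nat \<times> 'b"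
  assumes k: "k < n" and x: "x \<in> extensional {..<n}"
    and L: "\<And>p. p \<in> L \<Longrightarrow> p \<in> extensional {..<n} \<and> p k = x0 k" and inj: "inj_on \<iota> L"
  shows "(\<lambda>N. exp (\<Sum>i<n. detector_potentials k L \<iota> D U N (Some h) i (x i)))
           \<longlonglongrightarrow> (if x(k := x0 k) \<in> L \<and> h = \<iota> (x(k := x0 k)) then exp (ln (D x)) else 0)"
proof (cases "h \<in> \<iota> ` L")
  case True
  define p where "p = inv_into L \<iota> h"
  have p: "p \<in> L" "\<iota> p = h"
    using True by (auto simp: p_def inv_into_into f_inv_into_f)
  have on_line: "x(k := p k) = p \<longleftrightarrow> x(k := x0 k) \<in> L \<and> h = \<iota> (x(k := x0 k))"
    using p inj L[OF p(1)] by (auto simp: inj_on_def)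
  have "(\<lambda>N. exp (\<Sum>i<n. line_potential k (real N) p (\<lambda>a. ln (D (p(k := a)))) i (x i)))
      \<longlonglongrightarrow> (if x(k := p k) = p then exp (ln (D (p(k := x k)))) else 0)"
    using L[OF p(1)] by (intro tendsto_exp_sum_line_potential k x) simp
  moreover have "p(k := x k) = x" if "x(k := p k) = p"
    using that by (metis fun_upd_triv fun_upd_upd)
  ultimately show ?thesis
    using True by (simp add: detector_potentials_def on_line p_def[symmetric] cong: if_cong)
next
  case False
  then have "(\<Sum>i<n. detector_potentials k L \<iota> D U N (Some h) i (x i)) = - real N" for N
    using k by (simp add: detector_potentials_def)
  then show ?thesis
    using False LIMSEQ_exp_neg_real by auto
qed

lemma tendsto_rbm_weight_detector_potentials:
  fixes n m k :: nat and \<iota> :: "(nat \<Rightarrow> 'a) \<Rightarrow> nat \<times> 'b"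
  assumes x: "x \<in> PiE {..<n} Xs" and finX: "\<And>i. i < n \<Longrightarrow> finite (Xs i)"
    and hY: "\<And>j. j < m \<Longrightarrow> finite (Ys j) \<and> y0 j \<in> Ys j" and k: "k < n"
    and L: "\<And>p. p \<in> L \<Longrightarrow> p \<in> extensional {..<n} \<and> p k = x0 k"
    and inj: "inj_on \<iota> L" and \<iota>H: "\<iota> ` L \<subseteq> (SIGMA j:{..<m}. Ys j - {y0 j})"
    and D: "x(k := x0 k) \<in> L \<Longrightarrow> 0 < D x"
  shows "(\<lambda>N. rbm_weight n Xs x0 m Ys y0 (theta_of_potentials n x0 (detector_potentials k L \<iota> D U N)) x)
           \<longlonglongrightarrow> exp (\<Sum>i<n. U i (x i)) * (1 + (if x(k := x0 k) \<in> L then D x else 0))"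
proof -
  define d where "d = (if x(k := x0 k) \<in> L then D x else 0)"
  have "(\<lambda>N. exp (\<Sum>i<n. detector_potentials k L \<iota> D U N (Some h) i (x i)))
      \<longlonglongrightarrow> (if h = \<iota> (x(k := x0 k)) then d else 0)" for h
  proof -
    have "(\<lambda>N. exp (\<Sum>i<n. detector_potentials k L \<iota> D U N (Some h) i (x i)))
        \<longlonglongrightarrow> (if x(k := x0 k) \<in> L \<and> h = \<iota> (x(k := x0 k)) then exp (ln (D x)) else 0)"
      using x by (intro tendsto_exp_detector_potential k L inj) (simp add: PiE_iff)
    then show ?thesis using D by (auto simp: d_def)
  qed
  then have "(\<lambda>N. rbm_weight n Xs x0 m Ys y0 (theta_of_potentials n x0 (detector_potentials k L \<iota> D U N)) x)
      \<longlonglongrightarrow> exp (\<Sum>i<n. U i (x i))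
           * (1 + (if \<iota> (x(k := x0 k)) \<in> (SIGMA j:{..<m}. Ys j - {y0 j}) then d else 0))"
    by (intro tendsto_rbm_weight_single_excitation[where h="\<iota> (x(k := x0 k))" and d=d] x finX hY)
       (auto simp: detector_potentials_def)
  moreover have "(if \<iota> (x(k := x0 k)) \<in> (SIGMA j:{..<m}. Ys j - {y0 j}) then d else 0)
      = (if x(k := x0 k) \<in> L then D x else 0)"
    using \<iota>H unfolding d_def by auto
  ultimately show ?thesis by simp
qed

lemma positive_in_closure_RBM:
  fixes n m k :: nat and Xs :: "nat \<Rightarrow> 'a set" and Ys :: "nat \<Rightarrow> 'b set"
  assumes hX: "\<And>i. i < n \<Longrightarrow> finite (Xs i) \<and> x0 i \<in> Xs i"
    and hY: "\<And>j. j < m \<Longrightarrow> finite (Ys j) \<and> y0 j \<in> Ys j"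
    and k: "k < n"
    and lines: "card (PiE {..<n} (Xs(k := {x0 k}))) \<le> 1 + card (SIGMA j:{..<m}. Ys j - {y0 j})"
    and q: "q \<in> prob_simplex (PiE {..<n} Xs)" and pos: "\<And>x. x \<in> PiE {..<n} Xs \<Longrightarrow> 0 < q x"
  shows "q \<in> closure (RBM n Xs x0 m Ys y0)"
proof -
  define X where "X = PiE {..<n} Xs"
  define p0 where "p0 = restrict x0 {..<n}"
  define L where "L = PiE {..<n} (Xs(k := {x0 k})) - {p0}"
  have finXs: "\<And>i. i < n \<Longrightarrow> finite (Xs i)" using hX by blast
  have "p0 \<in> X" and "p0 k = x0 k"
    using hX k by (auto simp: p0_def X_def)
  have L_lines: "p \<in> extensional {..<n} \<and> p k = x0 k" if "p \<in> L" for p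
    using k that by (auto simp: L_def PiE_iff dest!: bspec[of _ _ k])
  have line_cases: "x(k := x0 k) = p0 \<or> x(k := x0 k) \<in> L" if "x \<in> X" for x
  proof -
    have "x(k := x0 k) \<in> PiE {..<n} (Xs(k := {x0 k}))"
      using that k by (auto simp: X_def PiE_iff extensional_def)
    then show ?thesis by (auto simp: L_def)
  qed
  obtain \<iota> where inj: "inj_on \<iota> L" and \<iota>H: "\<iota> ` L \<subseteq> (SIGMA j:{..<m}. Ys j - {y0 j})"
    using exists_line_assignment[OF hX hY k lines, folded p0_def, folded L_def] by blast
  obtain c where r_on: "\<And>x. x \<in> X \<Longrightarrow> x(k := p0 k) = p0 \<Longrightarrow>
       exp (\<Sum>i<n. line_potential k c p0 (\<lambda>a. ln (q (p0(k := a)))) i (x i)) = q x"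
    and r_off: "\<And>x. x \<in> X \<Longrightarrow> x(k := p0 k) \<noteq> p0 \<Longrightarrow>
       exp (\<Sum>i<n. line_potential k c p0 (\<lambda>a. ln (q (p0(k := a)))) i (x i)) < q x"
    using line_potential_minorant[where q=q, OF finXs k \<open>p0 \<in> X\<close>[unfolded X_def] pos, folded X_def]
    by blast
  define U where "U = line_potential k c p0 (\<lambda>a. ln (q (p0(k := a))))"
  define r where "r x = exp (\<Sum>i<n. U i (x i))" for x
  define D where "D x = q x / r x - 1" for x
  have "(\<lambda>N. rbm_weight n Xs x0 m Ys y0 (theta_of_potentials n x0 (detector_potentials k L \<iota> D U N)) x)
      \<longlonglongrightarrow> q x" if x: "x \<in> X" for x
  proof -
    have "x(k := x0 k) \<in> L \<Longrightarrow> 0 < D x"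
      using r_off[OF x] \<open>p0 k = x0 k\<close> by (auto simp: D_def r_def U_def L_def)
    then have "(\<lambda>N. rbm_weight n Xs x0 m Ys y0 (theta_of_potentials n x0 (detector_potentials k L \<iota> D U N)) x)
        \<longlonglongrightarrow> r x * (1 + (if x(k := x0 k) \<in> L then D x else 0))"
      unfolding r_def
      by (intro tendsto_rbm_weight_detector_potentials[where L=L and \<iota>=\<iota> and D=D]
          x[unfolded X_def] finXs hY k L_lines inj \<iota>H)
    moreover have "r x * (1 + (if x(k := x0 k) \<in> L then D x else 0)) = q x"
      using line_cases[OF x] r_on[OF x] \<open>p0 k = x0 k\<close> by (auto simp: D_def r_def U_def L_def)
    ultimately show ?thesis by simp
  qed
  then show ?thesis
    using q by (intro in_closure_RBM_if_weights_tendsto) (auto simp: X_def)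
qed

theorem corollary2:
  fixes n m :: nat and Xs :: "nat \<Rightarrow> 'a set" and Ys :: "nat \<Rightarrow> 'b set"
    and x0 :: "nat \<Rightarrow> 'a" and y0 :: "nat \<Rightarrow> 'b"
  assumes "0 < n"
    and "\<And>i. i < n \<Longrightarrow> finite (Xs i) \<and> x0 i \<in> Xs i"
    and "\<And>j. j < m \<Longrightarrow> finite (Ys j) \<and> y0 j \<in> Ys j"
    and "1 + (\<Sum>j<m. real (card (Ys j)) - 1)
           \<ge> real (card (PiE {..<n} Xs)) / real (Max ((\<lambda>i. card (Xs i)) ` {..<n}))"
  shows "prob_simplex (PiE {..<n} Xs) \<subseteq> closure (RBM n Xs x0 m Ys y0)"
proof -
  obtain k where k: "k < n" and kmax: "card (Xs k) = Max ((\<lambda>i. card (Xs i)) ` {..<n})"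
    using Max_in[of "(\<lambda>i. card (Xs i)) ` {..<n}"] assms(1) by fastforce
  have "0 < card (Xs k)" using assms(2)[OF k] by (auto simp: card_gt_0_iff)
  then have lines: "card (PiE {..<n} (Xs(k := {x0 k}))) \<le> 1 + card (SIGMA j:{..<m}. Ys j - {y0 j})"
    by (rule card_lines_le_card_hidden_states[OF k]) (use assms(3,4) kmax in auto)
  have "finite (PiE {..<n} Xs)" "PiE {..<n} Xs \<noteq> {}"
    using assms(2) by (auto simp: PiE_eq_empty_iff intro!: finite_PiE)
  then have "prob_simplex (PiE {..<n} Xs)
      \<subseteq> closure {q \<in> prob_simplex (PiE {..<n} Xs). \<forall>x\<in>PiE {..<n} Xs. 0 < q x}"
    by (rule prob_simplex_subset_closure_positive)
  also have "\<dots> \<subseteq> closure (RBM n Xs x0 m Ys y0)"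
    using positive_in_closure_RBM[OF assms(2,3) k lines] by (intro closure_minimal) auto
  finally show ?thesis .
qed

end
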